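(* Let $c\in\mathbb{Q}$ with $c<0$, let $n\ge1$, and let $f$ be a $c$-frieze of order $n$ over $\mathbb{Q}$. If $\Sigma\subseteq\mathbb{B}_n$ is a section such that $f(p)>0$ for every $p=(i,j)\in\Sigma$ with $-1\le j-i\le n$ (the points of $\Sigma$ in rows $0,\dots,n+1$), then $f(i,j)>0$ for all $(i,j)\in\mathbb{Z}^2$ with $-1\le j-i\le n$.
   Context: The $c$-continuant polynomials $P_k=P_k^c$ ($k\ge-1$) are defined by $P_{-1}=0$, $P_0=1$, and for $k\ge1$, $P_k(x_1,\dots,x_k)=x_kP_{k-1}(x_1,\dots,x_{k-1})+cP_{k-2}(x_1,\dots,x_{k-2})$. A family $(x_i)_{i\in\mathbb{Z}}$ of rationals is $n$-admissible if $P_{n+2}(x_i,\dots,x_{i+n+1})=0$ for all $i$. Let $\mathbb{B}_n=\{(i,j)\in\mathbb{Z}^2:-2\le j-i\le n+1\}$; the point $(i,j)$ lies in row $j-i+1$. A $c$-frieze of order $n$ over $\mathbb{Q}$ is a function $f:\mathbb{B}_n\to\mathbb{Q}$ for which there is an $n$-admissible family $(x_i)$ with $f(i,j)=P_{j-i+1}(x_i,\dots,x_j)$ for all $(i,j)\in\mathbb{B}_n$ (rows $-1$ and $n+2$ are identically $0$). A section is a subset $\Sigma\subseteq\mathbb{B}_n$ with $|\Sigma|=n+4$ such that for every $(i_0,j_0)\in\Sigma$: (a) if $(i_0,j_0-1)$ and $(i_0+1,j_0)$ lie in $\mathbb{B}_n$, at least one of them is in $\Sigma$; (b) if $(i_0-1,j_0)$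 and $(i_0,j_0+1)$ lie in $\mathbb{B}_n$, at least one of them is in $\Sigma$. *)

theory Defs
  imports Complex_Main
begin

text \<open>c-continuant polynomials: contP c x k = P_k(x 1, ..., x k) for k \<ge> 0
  (P_0 = 1, P_1 = x_1, P_k = x_k P_{k-1} + c P_{k-2}; with P_{-1} = 0 this gives P_1 = x_1).\<close>
fun contP :: "rat \<Rightarrow> (nat \<Rightarrow> rat) \<Rightarrow> nat \<Rightarrow> rat" where
  "contP c x 0 = 1"
| "contP c x (Suc 0) = x 1"
| "contP c x (Suc (Suc k)) = x (Suc (Suc k)) * contP c x (Suc k) + c * contP c x k"

text \<open>P_{j-i+1}(x_i, ..., x_j) for an integer-indexed family, with P_{-1} = 0
  (and value 0 for j - i + 1 < -1, never used).\<close>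
definition contI :: "rat \<Rightarrow> (int \<Rightarrow> rat) \<Rightarrow> int \<Rightarrow> int \<Rightarrow> rat" where
  "contI c x i j = (if j - i + 1 < 0 then 0
                    else contP c (\<lambda>m. x (i + int m - 1)) (nat (j - i + 1)))"

definition admissible :: "rat \<Rightarrow> nat \<Rightarrow> (int \<Rightarrow> rat) \<Rightarrow> bool" where
  "admissible c n x \<longleftrightarrow> (\<forall>i::int. contP c (\<lambda>m. x (i + int m - 1)) (n + 2) = 0)"

definition Bn :: "nat \<Rightarrow> (int \<times> int) set" where
  "Bn n = {(i, j). -2 \<le> j - i \<and> j - i \<le> int n + 1}"

definition is_frieze :: "rat \<Rightarrow> nat \<Rightarrow> (int \<times> int \<Rightarrow> rat) \<Rightarrow> bool" where
  "is_frieze c n f \<longleftrightarrow>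
     (\<exists>x. admissible c n x \<and> (\<forall>(i, j) \<in> Bn n. f (i, j) = contI c x i j))"

definition is_section :: "nat \<Rightarrow> (int \<times> int) set \<Rightarrow> bool" where
  "is_section n S \<longleftrightarrow> S \<subseteq> Bn n \<and> card S = n + 4 \<and>
     (\<forall>(i, j) \<in> S.
        ((i, j - 1) \<in> Bn n \<and> (i + 1, j) \<in> Bn n \<longrightarrow> (i, j - 1) \<in> S \<or> (i + 1, j) \<in> S) \<and>
        ((i - 1, j) \<in> Bn n \<and> (i, j + 1) \<in> Bn n \<longrightarrow> (i - 1, j) \<in> S \<or> (i, j + 1) \<in> S))"

end

theory Submission
  imports Defs
begin

text \<open>Entries of a \<open>c\<close>-frieze satisfy the diamond rule
  \<open>f(i,j) f(i+1,j+1) - f(i,j+1) f(i+1,j) = (-c)^(j-i+1)\<close>, whose right-hand side is positive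
  for \<open>c < 0\<close>. A section contains a path through all rows that moves at most one step to the left
  per row. Positivity spreads from the path to its right by induction on \<open>i + j\<close>: positive west
  and south neighbours and a non-negative north neighbour (it vanishes in row \<open>n + 2\<close>) force a
  positive entry through the diamond rule. The left of the path follows by
  the reflection \<open>(i,j) \<mapsto> (-j,-i)\<close>, which preserves the diamond rule.\<close>

lemma contI_row_minus_one: "contI c x i (i - 2) = 0"
  by (simp add: contI_def)

lemma contI_row_zero: "contI c x i (i - 1) = 1"
  by (simp add: contI_def)

lemma contI_rec:
  assumes "i \<le> j"
  shows "contI c x i j = x j * contI c x i (j - 1) + c * contI c x i (j - 2)"
proof (cases "j = i")
  case True
  then show ?thesis by (simp add: contI_def)
next
  case False
  define k where "k = nat (j - i - 1)"
  have "nat (j - i + 1) = Suc (Suc k)" "nat (j - 1 - i + 1) = Suc k" "nat (j - 2 - i + 1) = k"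
    and "x (i + int (Suc (Suc k)) - 1) = x j"
    using assms False by (simp_all add: k_def)
  then show ?thesis
    using assms False unfolding contI_def by simp
qed

lemma contI_det:
  assumes "i - 1 \<le> j"
  shows "contI c x i j * contI c x (i + 1) (j + 1) - contI c x i (j + 1) * contI c x (i + 1) j
    = (-c) ^ nat (j - i + 1)"
  using assms
proof (induction "nat (j - i + 1)" arbitrary: j)
  case 0
  then have "j = i - 1" by simp
  moreover have "contI c x (i + 1) (i - 1) = 0" "contI c x (i + 1) i = 1"
    using contI_row_minus_one[of c x "i + 1"] contI_row_zero[of c x "i + 1"] by simp_all
  ultimately show ?case by (simp add: contI_row_zero)
next
  case (Suc m)
  let ?K = "contI c x"
  have "m = nat (j - 1 - i + 1)" "i - 1 \<le> j - 1"
    using Suc.hyps(2) by linarith+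
  then have "?K i (j - 1) * ?K (i + 1) (j - 1 + 1) - ?K i (j - 1 + 1) * ?K (i + 1) (j - 1)
      = (-c) ^ nat (j - 1 - i + 1)"
    by (rule Suc.hyps(1))
  then have IH: "?K i (j - 1) * ?K (i + 1) j - ?K i j * ?K (i + 1) (j - 1) = (-c) ^ m"
    using \<open>m = nat (j - 1 - i + 1)\<close> by simp
  have "?K (i + 1) (j + 1) = x (j + 1) * ?K (i + 1) j + c * ?K (i + 1) (j - 1)"
    and "?K i (j + 1) = x (j + 1) * ?K i j + c * ?K i (j - 1)"
    using contI_rec[of "i + 1" "j + 1" c x] contI_rec[of i "j + 1" c x] Suc.hyps(2) by simp_all
  then have "?K i j * ?K (i + 1) (j + 1) - ?K i (j + 1) * ?K (i + 1) j
      = -c * (?K i (j - 1) * ?K (i + 1) j - ?K i j * ?K (i + 1) (j - 1))"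
    by (simp add: algebra_simps)
  with IH Suc.hyps(2) show ?case by (metis power_Suc)
qed

lemma contI_top_row:
  assumes "admissible c n x"
  shows "contI c x i (i + int n + 1) = 0"
proof -
  have "nat (i + int n + 1 - i + 1) = n + 2" by simp
  then show ?thesis using assms unfolding admissible_def contI_def by simp
qed

lemma walk_down_to_row:
  fixes P :: "int \<Rightarrow> int \<Rightarrow> bool"
  assumes step: "\<And>a t. lo < t \<Longrightarrow> t \<le> t0 \<Longrightarrow> P a t \<Longrightarrow> \<exists>b. P b (t - 1)"
    and "P a0 t0" "lo \<le> t0"
  shows "\<exists>a. P a lo"
proof -
  have "\<exists>a. P a lo" if "P a t" "lo \<le> t" "t \<le> t0" for a t
    using that
  proof (induction "nat (t - lo)" arbitrary: a t)
    case 0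
    then have "t = lo" by simp
    with 0 show ?case by blast
  next
    case (Suc k)
    then obtain b where "P b (t - 1)" using step by fastforce
    moreover have "k = nat (t - 1 - lo)" "lo \<le> t - 1" using Suc.hyps(2) by linarith+
    ultimately show ?case using Suc by auto
  qed
  then show ?thesis using assms by blast
qed

lemma walk_up_path:
  fixes P :: "int \<Rightarrow> int \<Rightarrow> bool"
  assumes step: "\<And>a t. lo \<le> t \<Longrightarrow> t < hi \<Longrightarrow> P a t \<Longrightarrow> P (a - 1) (t + 1) \<or> P a (t + 1)"
    and start: "P a0 lo"
  shows "\<exists>g. (\<forall>t. lo \<le> t \<and> t \<le> hi \<longrightarrow> P (g t) t) \<and> (\<forall>t. g (t + 1) = g t - 1 \<or> g (t + 1) = g t)"
proof -
  define h where "h = rec_nat a0 (\<lambda>k a. if P (a - 1) (lo + int k + 1) then a - 1 else a)"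
  define g where "g t = h (nat (t - lo))" for t
  have P_h: "P (h k) (lo + int k)" if "lo + int k \<le> hi" for k
    using that
  proof (induction k)
    case 0
    then show ?case using start by (simp add: h_def)
  next
    case (Suc k)
    then have "P (h k - 1) (lo + int k + 1) \<or> P (h k) (lo + int k + 1)"
      using step[of "lo + int k" "h k"] by simp
    moreover have "h (Suc k) = (if P (h k - 1) (lo + int k + 1) then h k - 1 else h k)"
      by (simp add: h_def)
    ultimately show ?case by (auto simp: add_ac)
  qed
  have "P (g t) t" if "lo \<le> t" "t \<le> hi" for t
    using P_h[of "nat (t - lo)"] that by (simp add: g_def)
  moreover have "g (t + 1) = g t - 1 \<or> g (t + 1) = g t" for t
  proof (cases "lo \<le> t")
    case True
    then have "nat (t + 1 - lo) = Suc (nat (t - lo))" by simp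
    then show ?thesis by (simp add: g_def h_def)
  next
    case False
    then show ?thesis by (simp add: g_def)
  qed
  ultimately show ?thesis by blast
qed

lemma section_contains_path:
  assumes "is_section n S"
  shows "\<exists>g. (\<forall>t. -2 \<le> t \<and> t \<le> int n + 1 \<longrightarrow> (g t, g t + t) \<in> S)
    \<and> (\<forall>t. g (t + 1) = g t - 1 \<or> g (t + 1) = g t)"
proof -
  define P where "P a t \<longleftrightarrow> (a, a + t) \<in> S" for a t :: int
  have S_Bn: "S \<subseteq> Bn n" and "S \<noteq> {}"
    using assms by (auto simp: is_section_def)
  then obtain i0 j0 where "(i0, j0) \<in> S" by auto
  then have row0: "-2 \<le> j0 - i0" "j0 - i0 \<le> int n + 1" and "P i0 (j0 - i0)"
    using S_Bn by (auto simp: Bn_def P_def)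
  have down: "P a (t - 1) \<or> P (a + 1) (t - 1)" if "-2 < t" "t \<le> int n + 1" "P a t" for a t
  proof -
    have "(a, a + t - 1) \<in> Bn n" "(a + 1, a + t) \<in> Bn n"
      using that by (auto simp: Bn_def)
    then have "(a, a + t - 1) \<in> S \<or> (a + 1, a + t) \<in> S"
      using assms \<open>P a t\<close> by (fastforce simp: is_section_def P_def)
    then show ?thesis by (simp add: P_def algebra_simps)
  qed
  have up: "P (a - 1) (t + 1) \<or> P a (t + 1)" if "-2 \<le> t" "t < int n + 1" "P a t" for a t
  proof -
    have "(a - 1, a + t) \<in> Bn n" "(a, a + t + 1) \<in> Bn n"
      using that by (auto simp: Bn_def)
    then have "(a - 1, a + t) \<in> S \<or> (a, a + t + 1) \<in> S"
      using assms \<open>P a t\<close> by (fastforce simp: is_section_def P_def)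
    then show ?thesis by (simp add: P_def algebra_simps)
  qed
  obtain a where "P a (-2)"
    using walk_down_to_row[of "-2" "j0 - i0" P i0] down row0 \<open>P i0 (j0 - i0)\<close> by fastforce
  then show ?thesis
    using walk_up_path[of "-2" "int n + 1" P a] up unfolding P_def by blast
qed

lemma positive_right_of_path:
  fixes K :: "int \<Rightarrow> int \<Rightarrow> 'a::linordered_field" and g :: "int \<Rightarrow> int"
  assumes det: "\<And>i j. i - 1 \<le> j \<Longrightarrow> K i (j + 1) * K (i + 1) j < K i j * K (i + 1) (j + 1)"
    and row0: "\<And>i. K i (i - 1) = 1"
    and top: "\<And>i. K i (i + int n + 1) = 0"
    and adj: "\<And>t. g (t + 1) = g t - 1 \<or> g (t + 1) = g t"
    and path: "\<And>t. -1 \<le> t \<Longrightarrow> t \<le> int n \<Longrightarrow> 0 < K (g t) (g t + t)"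
    and "-1 \<le> t" "t \<le> int n" "g t \<le> i"
  shows "0 < K i (i + t)"
proof -
  define L where "L = Min ((\<lambda>t. 2 * g t + t) ` {-1..int n})"
  have L: "L \<le> 2 * g t + t" if "-1 \<le> t" "t \<le> int n" for t
    using that unfolding L_def by (intro Min_le) auto
  show ?thesis
    using assms(6-8)
  proof (induction "nat (2 * i + t - L)" arbitrary: i t rule: less_induct)
    case less
    consider "i = g t" | "t = -1" | "g t < i" "0 \<le> t"
      using less.prems by linarith
    then show ?case
    proof cases
      case 1
      then show ?thesis using path less.prems by simp
    next
      case 2
      then show ?thesis using row0 by simp
    next
      case 3
      have "L < 2 * i + t" using L[of t] 3 less.prems by linarith
      have west: "0 < K (i - 1) (i - 1 + t)"
        by (rule less.hyps) (use 3 \<open>L < 2 * i + t\<close> less.prems in auto)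
      have south: "0 < K i (i + (t - 1))"
        by (rule less.hyps) (use adj[of "t - 1"] 3 \<open>L < 2 * i + t\<close> less.prems in auto)
      have north: "0 \<le> K (i - 1) (i + t)"
      proof (cases "t = int n")
        case True
        then show ?thesis using top[of "i - 1"] by simp
      next
        case False
        have "0 < K (i - 1) (i - 1 + (t + 1))"
          by (rule less.hyps) (use adj[of t] 3 \<open>L < 2 * i + t\<close> less.prems False in auto)
        then show ?thesis by simp
      qed
      have "K (i - 1) (i + t) * K i (i + (t - 1)) < K (i - 1) (i - 1 + t) * K i (i + t)"
        using det[of "i - 1" "i - 1 + t"] 3 by (simp add: algebra_simps)
      moreover have "0 \<le> K (i - 1) (i + t) * K i (i + (t - 1))"
        using north south by simp
      ultimately show ?thesis
        using west by (meson le_less_trans zero_less_mult_pos)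
    qed
  qed
qed

lemma positive_of_path:
  fixes K :: "int \<Rightarrow> int \<Rightarrow> 'a::linordered_field" and g :: "int \<Rightarrow> int"
  assumes det: "\<And>i j. i - 1 \<le> j \<Longrightarrow> K i (j + 1) * K (i + 1) j < K i j * K (i + 1) (j + 1)"
    and row0: "\<And>i. K i (i - 1) = 1"
    and top: "\<And>i. K i (i + int n + 1) = 0"
    and adj: "\<And>t. g (t + 1) = g t - 1 \<or> g (t + 1) = g t"
    and path: "\<And>t. -1 \<le> t \<Longrightarrow> t \<le> int n \<Longrightarrow> 0 < K (g t) (g t + t)"
    and "-1 \<le> t" "t \<le> int n"
  shows "0 < K i (i + t)"
proof (cases "g t \<le> i")
  case True
  then show ?thesis using positive_right_of_path[OF assms] by blast
next
  case False
  define K' where "K' i j = K (-j) (-i)" for i j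
  define g' where "g' t = - g t - t" for t
  have "0 < K' (-i - t) (-i - t + t)"
  proof (rule positive_right_of_path[of K' n g'])
    show "K' i (j + 1) * K' (i + 1) j < K' i j * K' (i + 1) (j + 1)" if "i - 1 \<le> j" for i j
      using det[of "-j - 1" "-i - 1"] that by (simp add: K'_def mult.commute)
    show "g' (t + 1) = g' t - 1 \<or> g' (t + 1) = g' t" for t
      using adj[of t] by (auto simp: g'_def)
    show "K' i (i - 1) = 1" for i
      using row0[of "1 - i"] by (simp add: K'_def)
    show "K' i (i + int n + 1) = 0" for i
      using top[of "-i - int n - 1"] by (simp add: K'_def)
  qed (use path False assms(6,7) in \<open>auto simp: K'_def g'_def algebra_simps\<close>)
  then show ?thesis by (simp add: K'_def add.commute)
qed

theorem mainTheorem5: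
  fixes c :: rat and n :: nat and f :: "int \<times> int \<Rightarrow> rat" and S :: "(int \<times> int) set"
  assumes "c < 0" and "n \<ge> 1"
    and "is_frieze c n f"
    and "is_section n S"
    and "\<forall>(i, j) \<in> S. -1 \<le> j - i \<and> j - i \<le> int n \<longrightarrow> f (i, j) > 0"
  shows "\<forall>i j. -1 \<le> j - i \<and> j - i \<le> int n \<longrightarrow> f (i, j) > 0"
proof -
  obtain x where adm: "admissible c n x" and f: "\<forall>(i, j) \<in> Bn n. f (i, j) = contI c x i j"
    using assms(3) unfolding is_frieze_def by blast
  obtain g where g_S: "\<forall>t. -2 \<le> t \<and> t \<le> int n + 1 \<longrightarrow> (g t, g t + t) \<in> S"
    and adj: "\<forall>t. g (t + 1) = g t - 1 \<or> g (t + 1) = g t"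
    using section_contains_path[OF assms(4)] by blast
  have f_contI: "f (i, i + t) = contI c x i (i + t)" if "-1 \<le> t" "t \<le> int n" for i t
    using f that by (auto simp: Bn_def)
  have det: "contI c x i (j + 1) * contI c x (i + 1) j < contI c x i j * contI c x (i + 1) (j + 1)"
    if "i - 1 \<le> j" for i j
  proof -
    have "0 < (-c) ^ nat (j - i + 1)" using assms(1) by simp
    then show ?thesis using contI_det[OF that, of c x] by simp
  qed
  have path: "0 < contI c x (g t) (g t + t)" if "-1 \<le> t" "t \<le> int n" for t
  proof -
    have "(g t, g t + t) \<in> S" using g_S that by simp
    then have "0 < f (g t, g t + t)" using assms(5) that by fastforce
    then show ?thesis using f_contI that by simp
  qed
  show ?thesis
  proof (intro allI impI)
    fix i j :: int
    assume ij: "-1 \<le> j - i \<and> j - i \<le> int n"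
    have "0 < contI c x i (i + (j - i))"
      by (rule positive_of_path[of "contI c x" n g, OF det contI_row_zero contI_top_row[OF adm]])
        (use adj path ij in auto)
    then show "0 < f (i, j)"
      using f_contI[of "j - i" i] ij by simp
  qed
qed

end
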